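(* A game $\mathcal{M}\subseteq\mathbb{N}_0$ (dimension $d=1$) is reflexive if and only if $\mathcal{M}=\mathcal{M}_k$ for some $k\in\mathbb{N}_0$, where $\mathcal{M}_0=\varnothing$ and, for $k\ge1$, with $p_k=3k-1$, $$\mathcal{M}_k=\{\,ip_k+j:\ i\in\mathbb{N}_0,\ k\le j\le 2k-1\,\}.$$
   Context: A one-heap game is a set $\mathcal{M}\subseteq\mathbb{N}_0$ of moves; from position $x\in\mathbb{N}_0$ one may move to $y\in\mathbb{N}_0$ iff $x-y\in\mathcal{M}$. Misère play: a player who cannot move wins. If $0\in\mathcal{M}$, $P(\mathcal{M})=\varnothing$. Otherwise: a position is an N-position if it has no option or some option is a P-position; otherwise it is a P-position; $P(\mathcal{M})$ denotes the set of P-positions. The game $\mathcal{M}$ is reflexive if $P(\mathcal{M})=\mathcal{M}$. *)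

theory Defs
  imports Main
begin

text \<open>One-heap misere game with move set M: from x one may move to x - m for m \<in> M, m \<le> x.
  is_P M x: x is a P-position.\<close>

function is_P :: "nat set \<Rightarrow> nat \<Rightarrow> bool" where
  "is_P M x = (if 0 \<in> M then False
               else (\<exists>m\<in>M. m \<le> x) \<and> (\<forall>m\<in>M. m \<le> x \<longrightarrow> \<not> is_P M (x - m)))"
  by auto
termination
  by (relation "measure snd") (auto, metis diff_less gr0I le0 not_le)

declare is_P.simps [simp del]

definition P_positions :: "nat set \<Rightarrow> nat set" where
  "P_positions M = {x. is_P M x}"

definition reflexive_game :: "nat set \<Rightarrow> bool" where
  "reflexive_game M \<longleftrightarrow> P_positions M = M"

definition M_k :: "nat \<Rightarrow> nat set" where
  "M_k k = (if k = 0 then {}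
            else {i * (3 * k - 1) + j | i j. k \<le> j \<and> j \<le> 2 * k - 1})"

end

theory Submission
  imports Defs
begin

text \<open>A reflexive game has no move 0, so it satisfies the P-position recursion with
  "P-position" read as "member of M": x \<in> M iff x \<ge> min M and x is not a sum of two elements
  of M. This recursion determines M from its minimum, so it suffices to check it for M_k k with
  k = min M. Modulo p = 3k - 1 the elements of M_k k are the residues in [k, 2k - 1]; a sum of two
  such residues lies in [2k, 3k - 2] or, after reduction, in [0, k - 1], and conversely every
  residue outside [k, 2k - 1] arises this way.\<close>

definition sum_free_saturated :: "nat set \<Rightarrow> bool" where
  "sum_free_saturated M \<longleftrightarrow>
     (\<forall>x. x \<in> M \<longleftrightarrow> (\<exists>m\<in>M. m \<le> x) \<and> (\<forall>a\<in>M. \<forall>b\<in>M. a + b \<noteq> x))"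

lemma sum_free_saturatedD:
  assumes "sum_free_saturated M"
  shows "x \<in> M \<longleftrightarrow> (\<exists>m\<in>M. m \<le> x) \<and> (\<forall>a\<in>M. \<forall>b\<in>M. a + b \<noteq> x)"
  using assms unfolding sum_free_saturated_def by (rule spec)

lemma sum_free_saturated_zero_notin:
  assumes "sum_free_saturated M"
  shows "0 \<notin> M"
  using sum_free_saturatedD[OF assms, of 0] by auto

lemma is_P_iff_not_sum:
  assumes M0: "0 \<notin> M" and below: "\<forall>y<x. is_P M y \<longleftrightarrow> y \<in> M"
  shows "is_P M x \<longleftrightarrow> (\<exists>m\<in>M. m \<le> x) \<and> (\<forall>a\<in>M. \<forall>b\<in>M. a + b \<noteq> x)"
proof -
  have "\<not> is_P M (x - m) \<longleftrightarrow> (\<forall>b\<in>M. m + b \<noteq> x)" if "m \<in> M" "m \<le> x" for m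
  proof -
    have "x - m < x" using that M0 by (cases m) auto
    then have "is_P M (x - m) \<longleftrightarrow> x - m \<in> M" using below by blast
    then show ?thesis using \<open>m \<le> x\<close> by auto
  qed
  then have "(\<forall>m\<in>M. m \<le> x \<longrightarrow> \<not> is_P M (x - m)) \<longleftrightarrow> (\<forall>a\<in>M. \<forall>b\<in>M. a + b \<noteq> x)"
    by fastforce
  then show ?thesis using M0 by (subst is_P.simps) simp
qed

lemma reflexive_game_iff_sum_free_saturated:
  "reflexive_game M \<longleftrightarrow> sum_free_saturated M"
proof
  assume "reflexive_game M"
  then have P_iff: "is_P M y \<longleftrightarrow> y \<in> M" for y
    unfolding reflexive_game_def P_positions_def by blast
  have "0 \<notin> M"
  proof
    assume "0 \<in> M"
    then have "\<not> is_P M 0" by (subst is_P.simps) simp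
    then show False using P_iff \<open>0 \<in> M\<close> by blast
  qed
  then have "x \<in> M \<longleftrightarrow> (\<exists>m\<in>M. m \<le> x) \<and> (\<forall>a\<in>M. \<forall>b\<in>M. a + b \<noteq> x)" for x
    using is_P_iff_not_sum[of M x] P_iff by simp
  then show "sum_free_saturated M"
    unfolding sum_free_saturated_def by blast
next
  assume sat: "sum_free_saturated M"
  have "is_P M x \<longleftrightarrow> x \<in> M" for x
  proof (induction x rule: less_induct)
    case (less x)
    then have "\<forall>y<x. is_P M y \<longleftrightarrow> y \<in> M" by blast
    then have "is_P M x \<longleftrightarrow> (\<exists>m\<in>M. m \<le> x) \<and> (\<forall>a\<in>M. \<forall>b\<in>M. a + b \<noteq> x)"
      by (rule is_P_iff_not_sum[OF sum_free_saturated_zero_notin[OF sat]])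
    with sum_free_saturatedD[OF sat, of x] show ?case by blast
  qed
  then show "reflexive_game M"
    unfolding reflexive_game_def P_positions_def by blast
qed

lemma sum_free_saturated_unique:
  assumes M: "sum_free_saturated M" and N: "sum_free_saturated N"
    and same_threshold: "\<And>x. (\<exists>m\<in>M. m \<le> x) \<longleftrightarrow> (\<exists>m\<in>N. m \<le> x)"
  shows "M = N"
proof -
  have "x \<in> M \<longleftrightarrow> x \<in> N" for x
  proof (induction x rule: less_induct)
    case (less x)
    have summands_less: "a < x \<and> b < x" if "a + b = x" "a \<in> A" "b \<in> A" "0 \<notin> A"
      for a b and A :: "nat set"
      using that by (cases a; cases b) auto
    have "(\<forall>a\<in>M. \<forall>b\<in>M. a + b \<noteq> x) \<longleftrightarrow> (\<forall>a\<in>N. \<forall>b\<in>N. a + b \<noteq> x)"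
      using summands_less less.IH sum_free_saturated_zero_notin[OF M]
        sum_free_saturated_zero_notin[OF N] by metis
    then show ?case using sum_free_saturatedD[OF M] sum_free_saturatedD[OF N] same_threshold
      by presburger
  qed
  then show ?thesis by blast
qed

lemma mem_M_k_iff:
  assumes "0 < k"
  shows "x \<in> M_k k \<longleftrightarrow> k \<le> x mod (3 * k - 1) \<and> x mod (3 * k - 1) < 2 * k"
proof
  assume "x \<in> M_k k"
  then obtain i j where "x = i * (3 * k - 1) + j" "k \<le> j" "j \<le> 2 * k - 1"
    using assms by (auto simp: M_k_def)
  moreover have "j < 3 * k - 1" using \<open>j \<le> 2 * k - 1\<close> assms by linarith
  ultimately show "k \<le> x mod (3 * k - 1) \<and> x mod (3 * k - 1) < 2 * k"
    using assms by simp
next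
  assume "k \<le> x mod (3 * k - 1) \<and> x mod (3 * k - 1) < 2 * k"
  then have "k \<le> x mod (3 * k - 1)" "x mod (3 * k - 1) \<le> 2 * k - 1" by linarith+
  moreover have "x = x div (3 * k - 1) * (3 * k - 1) + x mod (3 * k - 1)"
    by (metis div_mult_mod_eq)
  ultimately have "\<exists>i j. x = i * (3 * k - 1) + j \<and> k \<le> j \<and> j \<le> 2 * k - 1"
    by blast
  then show "x \<in> M_k k" using assms unfolding M_k_def by simp
qed

lemma M_k_ge:
  assumes "0 < k" "x \<in> M_k k"
  shows "k \<le> x"
  using assms mem_M_k_iff by (meson le_trans mod_less_eq_dividend)

lemma self_mem_M_k:
  assumes "0 < k"
  shows "k \<in> M_k k"
  using assms by (simp add: mem_M_k_iff)

lemma ex_le_M_k_iff: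
  assumes "0 < k"
  shows "(\<exists>m\<in>M_k k. m \<le> x) \<longleftrightarrow> k \<le> x"
  using M_k_ge[OF assms] self_mem_M_k[OF assms] le_trans by blast

lemma M_k_sum_free:
  assumes k: "0 < k" and a: "a \<in> M_k k" and b: "b \<in> M_k k"
  shows "a + b \<notin> M_k k"
proof -
  define p where "p = 3 * k - 1"
  have p: "p + 1 = 3 * k" using k unfolding p_def by simp
  define s where "s = a mod p + b mod p"
  have mem: "y \<in> M_k k \<longleftrightarrow> k \<le> y mod p \<and> y mod p < 2 * k" for y
    using k by (simp add: mem_M_k_iff p_def)
  have s: "2 * k \<le> s" "s + 2 \<le> 4 * k" using a b unfolding mem s_def by linarith+
  have "(a + b) mod p = s mod p" unfolding s_def by (simp add: mod_add_eq)
  then have "(a + b) mod p < k \<or> 2 * k \<le> (a + b) mod p"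
  proof (cases "s < p")
    case False
    then have "s - p < p" using s p k by linarith
    then have "s mod p = s - p" using False by (simp add: le_mod_geq)
    then show ?thesis using \<open>(a + b) mod p = s mod p\<close> s p by linarith
  qed (use s in simp)
  then show ?thesis unfolding mem by linarith
qed

lemma not_mem_M_k_is_sum:
  assumes k: "0 < k" and "k \<le> x" and "x \<notin> M_k k"
  shows "\<exists>a\<in>M_k k. \<exists>b\<in>M_k k. a + b = x"
proof -
  define p where "p = 3 * k - 1"
  have p: "p + 1 = 3 * k" using k unfolding p_def by simp
  define q r where "q = x div p" and "r = x mod p"
  have "0 < p" using p k by linarith
  then have x: "x = q * p + r" and "r < p" by (simp_all add: q_def r_def)
  have mem: "y \<in> M_k k \<longleftrightarrow> k \<le> y mod p \<and> y mod p < 2 * k" for y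
    using k by (simp add: mem_M_k_iff p_def)
  have "r < k \<or> 2 * k \<le> r" using \<open>x \<notin> M_k k\<close> unfolding mem r_def by linarith
  then show ?thesis
  proof
    assume "r < k"
    then have "0 < q" using x \<open>k \<le> x\<close> by (cases q) auto
    define a where "a = (q - 1) * p + (2 * k - 1)"
    have "2 * k - 1 < p" using p k by linarith
    then have "a mod p = 2 * k - 1" unfolding a_def by simp
    then have "a \<in> M_k k" unfolding mem using k by linarith
    moreover have "r + k \<in> M_k k" unfolding mem using \<open>r < k\<close> p by simp
    moreover have "a + (r + k) = x"
    proof -
      have "q * p = (q - 1) * p + p" using \<open>0 < q\<close> by (cases q) auto
      then show ?thesis unfolding a_def using x p k by linarith
    qed
    ultimately show ?thesis by blast
  next
    assume "2 * k \<le> r"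
    have "k < p" using p k by linarith
    with k have "q * p + k \<in> M_k k" unfolding mem by simp
    moreover have "(r - k) mod p = r - k" using \<open>r < p\<close> by simp
    then have "r - k \<in> M_k k" unfolding mem using \<open>2 * k \<le> r\<close> \<open>r < p\<close> p by linarith
    moreover have "(q * p + k) + (r - k) = x" using x \<open>2 * k \<le> r\<close> by simp
    ultimately show ?thesis by blast
  qed
qed

lemma sum_free_saturated_M_k: "sum_free_saturated (M_k k)"
proof (cases "k = 0")
  case True
  then show ?thesis by (simp add: M_k_def sum_free_saturated_def)
next
  case False
  then have k: "0 < k" by simp
  show ?thesis
    unfolding sum_free_saturated_def ex_le_M_k_iff[OF k]
  proof (intro allI iffI conjI)
    fix x
    assume "x \<in> M_k k"
    then show "k \<le> x" by (rule M_k_ge[OF k])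
    show "\<forall>a\<in>M_k k. \<forall>b\<in>M_k k. a + b \<noteq> x"
      using M_k_sum_free[OF k] \<open>x \<in> M_k k\<close> by blast
  next
    fix x
    assume "k \<le> x \<and> (\<forall>a\<in>M_k k. \<forall>b\<in>M_k k. a + b \<noteq> x)"
    then show "x \<in> M_k k" using not_mem_M_k_is_sum[OF k] by blast
  qed
qed

theorem theorem6:
  fixes M :: "nat set"
  shows "reflexive_game M \<longleftrightarrow> (\<exists>k. M = M_k k)"
proof
  assume "reflexive_game M"
  then have sat: "sum_free_saturated M"
    by (simp add: reflexive_game_iff_sum_free_saturated)
  show "\<exists>k. M = M_k k"
  proof (cases "M = {}")
    case True
    then show ?thesis by (auto simp: M_k_def)
  next
    case False
    define k where "k = (LEAST x. x \<in> M)"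
    have "k \<in> M" and k_min: "\<forall>m\<in>M. k \<le> m"
      using False unfolding k_def by (auto intro: LeastI Least_le)
    then have "0 < k" using sum_free_saturated_zero_notin[OF sat] by (cases k) auto
    then have "(\<exists>m\<in>M_k k. m \<le> x) \<longleftrightarrow> k \<le> x" for x
      by (rule ex_le_M_k_iff)
    moreover have "(\<exists>m\<in>M. m \<le> x) \<longleftrightarrow> k \<le> x" for x
      using \<open>k \<in> M\<close> k_min le_trans by blast
    ultimately have "M = M_k k"
      using sum_free_saturated_unique[OF sat sum_free_saturated_M_k] by presburger
    then show ?thesis ..
  qed
next
  assume "\<exists>k. M = M_k k"
  then show "reflexive_game M"
    using sum_free_saturated_M_k reflexive_game_iff_sum_free_saturated by blast
qed

end
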